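(* Let $\gamma_{\rm th}>0$ and let $P_O(P_j)=\mathbb{P}(\gamma_{k'}<\gamma_{\rm th})$ where $\gamma_{k'}=\dfrac{P_jD_{jk}^{-\beta_k}|h_{jk}|^2}{P_I\sum_{i=1}^N|g_{k,i}|^2}$. Then as $P_j\to\infty$, $$P_O(P_j)\sim\frac{(\gamma_{\rm th}\eta_kP_I)^{\frac{\alpha\mu}{2}}}{\mu\left(P_jD_{jk}^{-\beta_k}\beta\right)^{\frac{\alpha\mu}{2}}\Gamma(N)\Gamma(\mu)}\,\Gamma\!\left(\frac{\alpha\mu}{2}+N\right),$$ i.e. the ratio of the two sides tends to $1$.
   Context: Let $\alpha>0$, $\mu>0$, $\bar\Upsilon>0$ and set $\beta=\bar\Upsilon\,\Gamma(\mu)/\Gamma(\mu+2/\alpha)$. Let $|h_{jk}|^2$ be a random variable with density $f_{|h_{jk}|^2}(x)=\frac{\alpha x^{\alpha\mu/2-1}}{2\beta^{\alpha\mu/2}\Gamma(\mu)}\exp\!\big(-(x/\beta)^{\alpha/2}\big)$, $x>0$. Let $N\ge1$ be an integer and $|g_{k,1}|^2,\dots,|g_{k,N}|^2$ be i.i.d. exponential random variables with mean $\eta_k>0$, independent of $h_{jk}$. Let $P_I,D_{jk},\beta_k>0$ be fixed and $P_j>0$ vary. *)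

theory Defs
  imports "HOL-Probability.Probability" "HOL-Library.Landau_Symbols"
begin

definition amu_beta :: "real \<Rightarrow> real \<Rightarrow> real \<Rightarrow> real" where
  "amu_beta alpha mu Ups = Ups * Gamma mu / Gamma (mu + 2 / alpha)"

text \<open>Density of |h_jk|^2 (alpha-mu fading power), zero for x <= 0.\<close>
definition amu_density :: "real \<Rightarrow> real \<Rightarrow> real \<Rightarrow> real \<Rightarrow> real" where
  "amu_density alpha mu Ups x =
     (if x > 0 then
        alpha * x powr (alpha * mu / 2 - 1)
          / (2 * (amu_beta alpha mu Ups) powr (alpha * mu / 2) * Gamma mu)
          * exp (- ((x / amu_beta alpha mu Ups) powr (alpha / 2)))
      else 0)"

end

(*
  Write S = \<Sum>i |g_{k,i}|^2 and F for the distribution function of |h_jk|^2. Since S is a sum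
  of i.i.d. exponentials it is Erlang distributed, and by independence the outage probability
  equals E[F(k S / P_j)] with k = \<gamma>_th P_I D_jk^\<beta>_k. Near 0 the \<alpha>-\<mu> density behaves like
  x^(\<alpha>\<mu>/2 - 1), so F(z) ~ C z^(\<alpha>\<mu>/2) as z \<rightarrow> 0, and F(z) \<le> C z^(\<alpha>\<mu>/2) for all z > 0. The
  latter bound makes C (k S)^(\<alpha>\<mu>/2) an integrable majorant, so dominated convergence gives
  P_j^(\<alpha>\<mu>/2) P_O(P_j) \<rightarrow> C k^(\<alpha>\<mu>/2) E[S^(\<alpha>\<mu>/2)], and the Erlang moment
  E[S^a] = \<Gamma>(N + a) \<eta>^a / \<Gamma>(N) produces the stated constant.
*)

theory Submission
  imports Defs
begin

lemma nn_integral_powr_Icc: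
  fixes a z :: real assumes "a > 0" "z \<ge> 0"
  shows "(\<integral>\<^sup>+x. ennreal (x powr (a - 1)) * indicator {0..z} x \<partial>lborel) = ennreal (z powr a / a)"
proof -
  have "((\<lambda>x. x powr (a - 1)) has_integral (z powr (a - 1 + 1) / (a - 1 + 1))) {0..z}"
    by (rule has_integral_powr_from_0) (use assms in auto)
  then have "((\<lambda>x. x powr (a - 1)) has_integral (z powr a / a)) {0..z}" by simp
  from nn_integral_has_integral_lebesgue'[OF _ this] show ?thesis by auto
qed

lemma emeasure_density_powr_weight_bounds:
  fixes g :: "real \<Rightarrow> real" and a z m K :: real
  assumes [measurable]: "g \<in> borel_measurable borel"
    and a: "a > 0" and z: "z > 0" and m: "m \<ge> 0"
    and g: "\<And>x. 0 < x \<Longrightarrow> x < z \<Longrightarrow> m \<le> g x \<and> g x \<le> K"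
  defines "\<nu> \<equiv> density lborel (\<lambda>x. ennreal (if x > 0 then x powr (a - 1) * g x else 0))"
  shows "ennreal (m * (z powr a / a)) \<le> emeasure \<nu> {..<z}"
    and "emeasure \<nu> {..<z} \<le> ennreal (K * (z powr a / a))"
proof -
  have K: "K \<ge> 0" using g[of "z/2"] m z by auto
  have integral_cmult: "(\<integral>\<^sup>+x. ennreal c * (ennreal (x powr (a - 1)) * indicator {0..z} x) \<partial>lborel)
      = ennreal (c * (z powr a / a))" if "c \<ge> 0" for c
    using that a z by (subst nn_integral_cmult) (auto simp: nn_integral_powr_Icc ennreal_mult'[symmetric])
  have \<nu>: "emeasure \<nu> {..<z}
      = (\<integral>\<^sup>+x. ennreal (if x > 0 then x powr (a - 1) * g x else 0) * indicator {..<z} x \<partial>lborel)"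
    unfolding \<nu>_def by (rule emeasure_density) measurable
  show "ennreal (m * (z powr a / a)) \<le> emeasure \<nu> {..<z}"
    unfolding \<nu> integral_cmult[OF m, symmetric]
  proof (rule nn_integral_mono_AE)
    show "AE x in lborel. ennreal m * (ennreal (x powr (a - 1)) * indicator {0..z} x)
        \<le> ennreal (if x > 0 then x powr (a - 1) * g x else 0) * indicator {..<z} x"
      using AE_lborel_singleton[of z]
      by eventually_elim
        (use g m in \<open>auto simp: indicator_def ennreal_mult[symmetric] mult.commute intro!: ennreal_leI mult_left_mono\<close>)
  qed
  show "emeasure \<nu> {..<z} \<le> ennreal (K * (z powr a / a))"
    unfolding \<nu> integral_cmult[OF K, symmetric]
    by (rule nn_integral_mono)
      (use g K in \<open>auto simp: indicator_def ennreal_mult[symmetric] mult.commute intro!: ennreal_leI mult_left_mono\<close>)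
qed

lemma amu_beta_pos: "alpha > 0 \<Longrightarrow> mu > 0 \<Longrightarrow> Ups > 0 \<Longrightarrow> amu_beta alpha mu Ups > 0"
  unfolding amu_beta_def by (intro divide_pos_pos mult_pos_pos Gamma_real_pos add_pos_pos) auto

definition amu_cdf :: "real \<Rightarrow> real \<Rightarrow> real \<Rightarrow> real \<Rightarrow> real" where
  "amu_cdf alpha mu Ups z = measure (density lborel (\<lambda>x. ennreal (amu_density alpha mu Ups x))) {..<z}"

lemma amu_cdf_bounds:
  fixes alpha mu Ups z :: real
  assumes al: "alpha > 0" and mu: "mu > 0" and Ups: "Ups > 0" and z: "z > 0"
  defines "b \<equiv> amu_beta alpha mu Ups" and "a \<equiv> alpha * mu / 2"
  defines "C \<equiv> 1 / (mu * b powr a * Gamma mu)"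
  shows "exp (- ((z / b) powr (alpha / 2))) * (C * z powr a) \<le> amu_cdf alpha mu Ups z"
    and "amu_cdf alpha mu Ups z \<le> C * z powr a"
proof -
  define A where "A = alpha / (2 * b powr a * Gamma mu)"
  define g where "g = (\<lambda>x. A * exp (- ((x / b) powr (alpha / 2))))"
  have b: "b > 0" unfolding b_def using amu_beta_pos al mu Ups by blast
  have a: "a > 0" unfolding a_def using al mu by simp
  have A: "A > 0" unfolding A_def using b al Gamma_real_pos[OF mu] by simp
  have C: "A * (z powr a / a) = C * z powr a"
    unfolding A_def C_def a_def using al mu by (simp add: field_simps)
  have density_eq: "amu_density alpha mu Ups x = (if x > 0 then x powr (a - 1) * g x else 0)" for x
    unfolding amu_density_def g_def A_def a_def b_def by simp
  have g_bounds: "A * exp (- ((z / b) powr (alpha / 2))) \<le> g x \<and> g x \<le> A" if "0 < x" "x < z" for x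
  proof -
    have "(x / b) powr (alpha / 2) \<le> (z / b) powr (alpha / 2)"
      using that b al by (intro powr_mono2) (auto simp: divide_right_mono)
    then show ?thesis using A by (simp add: g_def)
  qed
  have "g \<in> borel_measurable borel" unfolding g_def by measurable
  note bounds = emeasure_density_powr_weight_bounds[OF this a z _ g_bounds, folded density_eq]
  have lower: "ennreal (exp (- ((z / b) powr (alpha / 2))) * (C * z powr a))
      \<le> emeasure (density lborel (\<lambda>x. ennreal (amu_density alpha mu Ups x))) {..<z}"
  proof -
    have "exp (- ((z / b) powr (alpha / 2))) * (C * z powr a)
        = A * exp (- ((z / b) powr (alpha / 2))) * (z powr a / a)"
      by (simp add: C[symmetric])
    then show ?thesis using bounds(1) A by simp
  qed
  have upper: "emeasure (density lborel (\<lambda>x. ennreal (amu_density alpha mu Ups x))) {..<z}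
      \<le> ennreal (C * z powr a)"
    using bounds(2) A C by (simp add: g_def)
  have "C \<ge> 0" unfolding C_def using b mu Gamma_real_pos[OF mu] by simp
  then show "exp (- ((z / b) powr (alpha / 2))) * (C * z powr a) \<le> amu_cdf alpha mu Ups z"
    using enn2real_mono[OF lower] upper unfolding amu_cdf_def measure_def
    by (simp add: top.not_eq_extremum order_le_less_trans)
  show "amu_cdf alpha mu Ups z \<le> C * z powr a"
    using upper \<open>C \<ge> 0\<close> unfolding amu_cdf_def measure_def by (simp add: enn2real_leI)
qed

lemma amu_cdf_asymp:
  fixes alpha mu Ups :: real
  assumes al: "alpha > 0" and mu: "mu > 0" and Ups: "Ups > 0"
  defines "b \<equiv> amu_beta alpha mu Ups" and "a \<equiv> alpha * mu / 2"
  defines "C \<equiv> 1 / (mu * b powr a * Gamma mu)"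
  shows "((\<lambda>z. amu_cdf alpha mu Ups z / z powr a) \<longlongrightarrow> C) (at_right 0)"
proof (rule tendsto_sandwich)
  have pos: "eventually (\<lambda>z. z > (0::real)) (at_right 0)" by (simp add: eventually_at_right_less)
  note bounds = amu_cdf_bounds[OF al mu Ups, folded b_def a_def, folded C_def]
  show "eventually (\<lambda>z. exp (- ((z / b) powr (alpha / 2))) * C \<le> amu_cdf alpha mu Ups z / z powr a) (at_right 0)"
    using pos by eventually_elim (use bounds(1) in \<open>simp add: C_def field_simps\<close>)
  show "eventually (\<lambda>z. amu_cdf alpha mu Ups z / z powr a \<le> C) (at_right 0)"
    using pos by eventually_elim (use bounds(2) in \<open>simp add: C_def field_simps\<close>)
  have "b > 0" unfolding b_def using amu_beta_pos al mu Ups by blast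
  then have "((\<lambda>z::real. z / b) \<longlongrightarrow> 0) (at_right 0)"
    by (intro tendsto_eq_intros) (auto intro: tendsto_ident_at)
  then have "((\<lambda>z::real. (z / b) powr (alpha / 2)) \<longlongrightarrow> 0) (at_right 0)"
    by (rule tendsto_zero_powrI[OF _ tendsto_const])
      (use al \<open>b > 0\<close> in \<open>auto simp: eventually_at_right_field intro: exI[of _ 1]\<close>)
  then have "((\<lambda>z. exp (- ((z / b) powr (alpha / 2))) * C) \<longlongrightarrow> exp (- 0) * C) (at_right 0)"
    by (intro tendsto_intros)
  then show "((\<lambda>z. exp (- ((z / b) powr (alpha / 2))) * C) \<longlongrightarrow> C) (at_right 0)" by simp
qed simp

lemma nn_integral_erlang_density_powr:
  fixes k :: nat and l a :: real
  assumes l: "0 < l" and s: "0 < real k + 1 + a"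
  shows "(\<integral>\<^sup>+x. ennreal (erlang_density k l x * x powr a) \<partial>lborel)
    = ennreal (Gamma (real k + 1 + a) / (fact k * l powr a))"
proof -
  define s where "s = real k + 1 + a"
  define \<gamma> where "\<gamma> = (\<lambda>t. ennreal (indicator {0..} t * t powr (s - 1) / exp t))"
  have [measurable]: "\<gamma> \<in> borel_measurable borel" unfolding \<gamma>_def by measurable
  have pointwise: "ennreal (erlang_density k l x * x powr a)
      = ennreal (l powr (- a) / fact k) * (ennreal l * \<gamma> (0 + l * x))" for x
  proof (cases "x > 0")
    case True
    have "x ^ k * x powr a = x powr (s - 1)" and "l ^ Suc k = l powr (- a) * l * l powr (s - 1)"
      using True l by (simp_all add: s_def powr_realpow[symmetric] powr_add[symmetric])
    then have "erlang_density k l x * x powr a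
        = l powr (- a) / fact k * (l * (indicator {0..} (l * x) * (l * x) powr (s - 1) / exp (l * x)))"
      using True l by (simp add: erlang_density_def powr_mult powr_minus exp_minus field_simps)
    then show ?thesis using True l by (simp add: \<gamma>_def ennreal_mult[symmetric])
  qed (use l in \<open>auto simp: \<gamma>_def erlang_density_def indicator_def zero_le_mult_iff\<close>)
  have "(\<integral>\<^sup>+x. ennreal (erlang_density k l x * x powr a) \<partial>lborel)
      = ennreal (l powr (- a) / fact k) * (ennreal l * (\<integral>\<^sup>+x. \<gamma> (0 + l * x) \<partial>lborel))"
    unfolding pointwise by (subst nn_integral_cmult, measurable)+
  also have "ennreal l * (\<integral>\<^sup>+x. \<gamma> (0 + l * x) \<partial>lborel) = ennreal (Gamma s)"
    using nn_integral_real_affine[of \<gamma> l 0] l s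
    by (simp add: Gamma_conv_nn_integral_real \<gamma>_def s_def)
  finally show ?thesis
    using l s Gamma_real_pos[of s] by (simp add: s_def ennreal_mult[symmetric] powr_minus divide_inverse mult_ac)
qed

lemma (in prob_space) erlang_distributed_pos:
  assumes "distributed M lborel S (erlang_density k l)"
  shows "AE \<omega> in M. S \<omega> > 0"
proof -
  have "AE x in density lborel (\<lambda>x. ennreal (erlang_density k l x)). x > 0"
    using AE_lborel_singleton[of 0]
    by (subst AE_density) (auto elim!: eventually_mono simp: erlang_density_def)
  then have "AE x in distr M lborel S. x > 0"
    unfolding distributed_distr_eq_density[OF assms] .
  from AE_distrD[OF _ this] show ?thesis using distributed_measurable[OF assms] by simp
qed

lemma (in prob_space) has_bochner_integral_erlang_powr:
  assumes S: "distributed M lborel S (erlang_density k l)" and l: "0 < l" and s: "0 < real k + 1 + a"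
  shows "has_bochner_integral M (\<lambda>\<omega>. S \<omega> powr a) (Gamma (real k + 1 + a) / (fact k * l powr a))"
proof (rule has_bochner_integral_nn_integral)
  have [measurable]: "S \<in> borel_measurable M"
    using distributed_measurable[OF S] by simp
  show "(\<lambda>\<omega>. S \<omega> powr a) \<in> borel_measurable M" by measurable
  show "0 \<le> Gamma (real k + 1 + a) / (fact k * l powr a)"
    using Gamma_real_pos[OF s] l by simp
  have "(\<integral>\<^sup>+\<omega>. ennreal (S \<omega> powr a) \<partial>M) = (\<integral>\<^sup>+x. ennreal (erlang_density k l x) * ennreal (x powr a) \<partial>lborel)"
    by (rule distributed_nn_integral[OF S, symmetric]) measurable
  also have "\<dots> = ennreal (Gamma (real k + 1 + a) / (fact k * l powr a))"
    using nn_integral_erlang_density_powr[OF l s] l by (simp add: ennreal_mult)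
  finally show "(\<integral>\<^sup>+\<omega>. ennreal (S \<omega> powr a) \<partial>M) = ennreal (Gamma (real k + 1 + a) / (fact k * l powr a))" .
qed simp

lemma (in prob_space) measure_ratio_less_eq_integral:
  fixes H S :: "'a \<Rightarrow> real" and t :: real
  assumes indep: "indep_var borel H borel S" and H: "distributed M lborel H f"
    and S_pos: "AE \<omega> in M. S \<omega> > 0"
  shows "measure M {\<omega> \<in> space M. H \<omega> / S \<omega> < t}
    = (\<integral>\<omega>. measure (density lborel f) {..< t * S \<omega>} \<partial>M)"
proof -
  define \<nu> where "\<nu> = density lborel f"
  define F where "F = (\<lambda>z. measure \<nu> {..<z})"
  define A where "A = {p :: real \<times> real. fst p / snd p < t}"
  have [measurable]: "H \<in> borel_measurable M" "S \<in> borel_measurable M"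
    using indep_var_rv1[OF indep] indep_var_rv2[OF indep] by auto
  have \<nu>: "\<nu> = distr M borel H"
    unfolding \<nu>_def distributed_distr_eq_density[OF H, symmetric] by (rule distr_cong) auto
  interpret HS: pair_prob_space \<nu> "distr M borel S"
    unfolding pair_prob_space_def pair_sigma_finite_def \<nu>
    by (auto intro!: prob_space_distr prob_space_imp_sigma_finite)
  have [measurable]: "F \<in> borel_measurable borel"
    by (rule borel_measurable_mono)
      (auto simp: mono_def F_def intro!: HS.M1.finite_measure_mono, simp add: \<nu>)
  have A[measurable]: "A \<in> sets (borel \<Otimes>\<^sub>M borel)"
  proof -
    have "A = {p \<in> space (borel \<Otimes>\<^sub>M borel). fst p / snd p < t}"
      by (auto simp: A_def space_pair_measure)
    also have "\<dots> \<in> sets (borel \<Otimes>\<^sub>M borel)" by measurable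
    finally show ?thesis .
  qed
  have sets_eq: "sets (\<nu> \<Otimes>\<^sub>M N) = sets (borel \<Otimes>\<^sub>M borel)" if "sets N = sets borel" for N
    by (intro sets_pair_measure_cong) (auto simp: \<nu> that)
  have "emeasure M {\<omega> \<in> space M. H \<omega> / S \<omega> < t} = emeasure (distr M (borel \<Otimes>\<^sub>M borel) (\<lambda>\<omega>. (H \<omega>, S \<omega>))) A"
    using A by (subst emeasure_distr) (auto simp: A_def intro!: arg_cong[where f = "emeasure M"])
  also have "distr M (borel \<Otimes>\<^sub>M borel) (\<lambda>\<omega>. (H \<omega>, S \<omega>)) = \<nu> \<Otimes>\<^sub>M distr M borel S"
    using indep unfolding indep_var_distribution_eq \<nu> by simp
  also have "emeasure (\<nu> \<Otimes>\<^sub>M distr M borel S) A = (\<integral>\<^sup>+y. emeasure \<nu> ((\<lambda>x. (x, y)) -` A) \<partial>distr M borel S)"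
    by (rule HS.emeasure_pair_measure_alt2) (simp add: sets_eq)
  also have "\<dots> = (\<integral>\<^sup>+\<omega>. emeasure \<nu> ((\<lambda>x. (x, S \<omega>)) -` A) \<partial>M)"
    by (rule nn_integral_distr) (simp, rule HS.measurable_emeasure_Pair2, simp add: sets_eq)
  also have "\<dots> = (\<integral>\<^sup>+\<omega>. ennreal (F (t * S \<omega>)) \<partial>M)"
  proof (rule nn_integral_cong_AE)
    show "AE \<omega> in M. emeasure \<nu> ((\<lambda>x. (x, S \<omega>)) -` A) = ennreal (F (t * S \<omega>))"
      using S_pos
    proof eventually_elim
      case (elim \<omega>)
      then have "(\<lambda>x. (x, S \<omega>)) -` A = {..< t * S \<omega>}"
        by (auto simp: A_def divide_less_eq)
      then show ?case by (simp add: F_def HS.M1.emeasure_eq_measure)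
    qed
  qed
  also have "\<dots> = ennreal (\<integral>\<omega>. F (t * S \<omega>) \<partial>M)"
  proof (rule nn_integral_eq_integral)
    show "integrable M (\<lambda>\<omega>. F (t * S \<omega>))"
      by (rule integrable_const_bound[where B = 1]) (simp add: F_def, measurable)
  qed (simp add: F_def)
  finally show ?thesis
    by (simp add: measure_def F_def \<nu>_def)
qed

lemma filterlim_divide_at_top_at_right_0:
  fixes y :: real assumes "y > 0"
  shows "filterlim (\<lambda>t. y / t) (at_right 0) at_top"
  unfolding filterlim_at
proof
  show "\<forall>\<^sub>F t in at_top. y / t \<in> {0<..} \<and> y / t \<noteq> 0"
    using eventually_gt_at_top[of 0] by eventually_elim (use assms in auto)
  show "((\<lambda>t. y / t) \<longlongrightarrow> 0) at_top"
    by (intro tendsto_divide_0[OF tendsto_const] filterlim_ident filterlim_at_top_imp_at_infinity)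
qed

lemma (in prob_space) tendsto_powr_mult_integral_at_top:
  fixes F :: "real \<Rightarrow> real" and S :: "'a \<Rightarrow> real" and a C :: real
  assumes [measurable]: "F \<in> borel_measurable borel" "S \<in> borel_measurable M"
    and F_bound: "\<And>z. z > 0 \<Longrightarrow> 0 \<le> F z \<and> F z \<le> C * z powr a"
    and F_lim: "((\<lambda>z. F z / z powr a) \<longlongrightarrow> C) (at_right 0)"
    and S_pos: "AE \<omega> in M. S \<omega> > 0" and moment: "integrable M (\<lambda>\<omega>. S \<omega> powr a)"
  shows "((\<lambda>t. t powr a * (\<integral>\<omega>. F (S \<omega> / t) \<partial>M)) \<longlongrightarrow> C * (\<integral>\<omega>. S \<omega> powr a \<partial>M)) at_top"
proof -
  have "((\<lambda>t. \<integral>\<omega>. t powr a * F (S \<omega> / t) \<partial>M) \<longlongrightarrow> (\<integral>\<omega>. C * S \<omega> powr a \<partial>M)) at_top"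
  proof (rule integral_dominated_convergence_at_top[where w = "\<lambda>\<omega>. C * S \<omega> powr a"])
    show "integrable M (\<lambda>\<omega>. C * S \<omega> powr a)" using moment by simp
    show "AE \<omega> in M. ((\<lambda>t. t powr a * F (S \<omega> / t)) \<longlongrightarrow> C * S \<omega> powr a) at_top"
      using S_pos
    proof eventually_elim
      case (elim \<omega>)
      have "((\<lambda>t. S \<omega> powr a * (F (S \<omega> / t) / (S \<omega> / t) powr a)) \<longlongrightarrow> S \<omega> powr a * C) at_top"
        by (intro tendsto_mult tendsto_const filterlim_compose[OF F_lim] filterlim_divide_at_top_at_right_0 elim)
      moreover have "\<forall>\<^sub>F t in at_top. S \<omega> powr a * (F (S \<omega> / t) / (S \<omega> / t) powr a) = t powr a * F (S \<omega> / t)"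
        using eventually_gt_at_top[of 0] by eventually_elim (use elim in \<open>simp add: powr_divide\<close>)
      ultimately show ?case by (simp add: tendsto_cong mult.commute)
    qed
    show "\<forall>\<^sub>F t in at_top. AE \<omega> in M. norm (t powr a * F (S \<omega> / t)) \<le> C * S \<omega> powr a"
      using eventually_gt_at_top[of 0]
    proof eventually_elim
      case (elim t)
      show ?case using S_pos
      proof eventually_elim
        case (elim \<omega>)
        with \<open>t > 0\<close> F_bound[of "S \<omega> / t"] have "0 \<le> F (S \<omega> / t) \<and> t powr a * F (S \<omega> / t) \<le> C * S \<omega> powr a"
          by (auto simp: powr_divide field_simps)
        with \<open>t > 0\<close> show ?case by simp
      qed
    qed
  qed simp_all
  then show ?thesis by simp
qed

lemma (in prob_space) measure_scaled_ratio_less_asymp_equiv: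
  fixes H S :: "'a \<Rightarrow> real" and a C V k :: real
  assumes indep: "indep_var borel H borel S" and H: "distributed M lborel H f"
    and S_pos: "AE \<omega> in M. S \<omega> > 0" and moment: "has_bochner_integral M (\<lambda>\<omega>. S \<omega> powr a) V"
    and F_bound: "\<And>z. z > 0 \<Longrightarrow> measure (density lborel f) {..<z} \<le> C * z powr a"
    and F_lim: "((\<lambda>z. measure (density lborel f) {..<z} / z powr a) \<longlongrightarrow> C) (at_right 0)"
    and C: "C > 0" and V: "V > 0" and k: "k > 0"
  shows "(\<lambda>t. measure M {\<omega> \<in> space M. t * H \<omega> / S \<omega> < k})
    \<sim>[at_top] (\<lambda>t. C * k powr a * V * t powr (- a))"
proof -
  define F where "F = (\<lambda>z. measure (density lborel f) {..<z})"
  interpret H_law: prob_space "density lborel f"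
    using prob_space_distr[of H lborel] distributed_measurable[OF H]
    by (simp add: distributed_distr_eq_density[OF H])
  have "mono F" by (auto simp: mono_def F_def intro!: H_law.finite_measure_mono)
  have [measurable]: "S \<in> borel_measurable M" using indep_var_rv2[OF indep] by simp
  have "has_bochner_integral M (\<lambda>\<omega>. k powr a * S \<omega> powr a) (k powr a * V)"
    using moment ..
  moreover have "AE \<omega> in M. k powr a * S \<omega> powr a = (k * S \<omega>) powr a"
    using S_pos by eventually_elim (use k in \<open>simp add: powr_mult\<close>)
  ultimately have moment_k: "has_bochner_integral M (\<lambda>\<omega>. (k * S \<omega>) powr a) (k powr a * V)"
    by (subst (asm) has_bochner_integral_cong_AE) simp_all
  have "((\<lambda>t. t powr a * (\<integral>\<omega>. F (k * S \<omega> / t) \<partial>M)) \<longlongrightarrow> C * (\<integral>\<omega>. (k * S \<omega>) powr a \<partial>M)) at_top"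
  proof (rule tendsto_powr_mult_integral_at_top)
    show "F \<in> borel_measurable borel" using \<open>mono F\<close> by (rule borel_measurable_mono)
    show "AE \<omega> in M. k * S \<omega> > 0" using S_pos by eventually_elim (use k in simp)
  qed (use F_bound F_lim moment_k in \<open>simp_all add: F_def has_bochner_integral_iff\<close>)
  then have lim: "((\<lambda>t. t powr a * (\<integral>\<omega>. F (k * S \<omega> / t) \<partial>M)) \<longlongrightarrow> C * k powr a * V) at_top"
    using moment_k by (simp add: has_bochner_integral_iff mult.assoc)
  have measure_eq: "measure M {\<omega> \<in> space M. t * H \<omega> / S \<omega> < k} = (\<integral>\<omega>. F (k * S \<omega> / t) \<partial>M)"
    if "t > 0" for t
  proof -
    have "t * h / s < k \<longleftrightarrow> h / s < k / t" for h s :: real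
      using that by (simp add: field_simps)
    then show ?thesis
      using measure_ratio_less_eq_integral[OF indep H S_pos, of "k / t"] by (simp add: F_def)
  qed
  have "((\<lambda>t. measure M {\<omega> \<in> space M. t * H \<omega> / S \<omega> < k} / t powr (- a))
      \<longlongrightarrow> C * k powr a * V) at_top"
    using lim
  proof (rule Lim_transform_eventually)
    show "\<forall>\<^sub>F t in at_top. t powr a * (\<integral>\<omega>. F (k * S \<omega> / t) \<partial>M)
        = measure M {\<omega> \<in> space M. t * H \<omega> / S \<omega> < k} / t powr (- a)"
      using eventually_gt_at_top[of 0]
      by eventually_elim (simp only: measure_eq, simp add: powr_minus divide_inverse)
  qed
  then show ?thesis
    using C V k by (intro asymp_equivI'_const) auto
qed

lemma (in prob_space) indep_vars_head_tail:
  fixes H :: "'a \<Rightarrow> real" and G :: "nat \<Rightarrow> 'a \<Rightarrow> real"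
  assumes "indep_vars (\<lambda>_. borel) (\<lambda>i. if i = 0 then H else G i) {0..N}"
  shows "indep_var borel H borel (\<lambda>\<omega>. \<Sum>i=1..N. G i \<omega>)"
    and "indep_vars (\<lambda>_. borel) G {1..N}"
proof -
  define X where "X = (\<lambda>i. if i = 0 then H else G i)"
  have "insert 0 {1..N} = {0..N}" by auto
  then have indep: "indep_vars (\<lambda>_. borel) X (insert 0 {1..N})"
    using assms by (simp add: X_def)
  have "indep_var borel (X 0) borel (\<lambda>\<omega>. \<Sum>i\<in>{1..N}. X i \<omega>)"
    by (rule indep_vars_sum[OF _ _ indep]) auto
  then show "indep_var borel H borel (\<lambda>\<omega>. \<Sum>i=1..N. G i \<omega>)"
    by (simp add: X_def)
  have "indep_vars (\<lambda>_. borel) X {1..N}" by (rule indep_vars_subset[OF indep]) auto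
  then show "indep_vars (\<lambda>_. borel) G {1..N}" by (subst indep_vars_cong) (auto simp: X_def)
qed

lemma (in prob_space) sum_exponential_powr_moment:
  fixes G :: "nat \<Rightarrow> 'a \<Rightarrow> real" and l a :: real
  assumes N: "N \<ge> 1" and l: "l > 0"
    and G: "\<And>i. i \<in> {1..N} \<Longrightarrow> distributed M lborel (G i) (exponential_density l)"
    and indep: "indep_vars (\<lambda>_. borel) G {1..N}" and a: "real N + a > 0"
  shows "AE \<omega> in M. (\<Sum>i=1..N. G i \<omega>) > 0"
    and "has_bochner_integral M (\<lambda>\<omega>. (\<Sum>i=1..N. G i \<omega>) powr a)
           (Gamma (real N + a) / (Gamma (real N) * l powr a))"
proof -
  have S: "distributed M lborel (\<lambda>\<omega>. \<Sum>i=1..N. G i \<omega>) (erlang_density (N - 1) l)"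
    using exponential_distributed_sum[of "{1..N}" l G] N l G indep by simp
  then show "AE \<omega> in M. (\<Sum>i=1..N. G i \<omega>) > 0"
    by (rule erlang_distributed_pos)
  have "real (N - 1) + 1 = real N" "fact (N - 1) = Gamma (real N)"
    using N Gamma_fact[of "N - 1", where 'a = real] by (simp_all add: of_nat_diff)
  then show "has_bochner_integral M (\<lambda>\<omega>. (\<Sum>i=1..N. G i \<omega>) powr a)
      (Gamma (real N + a) / (Gamma (real N) * l powr a))"
    using has_bochner_integral_erlang_powr[OF S l, of a] a by simp
qed

theorem mainTheorem5:
  fixes M :: "'a measure"
    and H :: "'a \<Rightarrow> real"
    and G :: "nat \<Rightarrow> 'a \<Rightarrow> real"
    and alpha mu Ups eta PI D betak gth :: real
    and N :: nat
  assumes "prob_space M"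
    and "alpha > 0" and "mu > 0" and "Ups > 0" and "eta > 0"
    and "PI > 0" and "D > 0" and "betak > 0" and "gth > 0"
    and "N \<ge> 1"
    and "distributed M lborel H (\<lambda>x. ennreal (amu_density alpha mu Ups x))"
    and "\<And>i. i \<in> {1..N} \<Longrightarrow> distributed M lborel (G i) (\<lambda>x. ennreal (exponential_density (1 / eta) x))"
    and "prob_space.indep_vars M (\<lambda>_. borel) (\<lambda>i. if i = 0 then H else G i) {0..N}"
  shows "(\<lambda>Pj. measure M {\<omega> \<in> space M.
              Pj * D powr (- betak) * H \<omega> / (PI * (\<Sum>i=1..N. G i \<omega>)) < gth})
         \<sim>[at_top]
         (\<lambda>Pj. (gth * eta * PI) powr (alpha * mu / 2)
               / (mu * (Pj * D powr (- betak) * amu_beta alpha mu Ups) powr (alpha * mu / 2)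
                  * Gamma (real N) * Gamma mu)
               * Gamma (alpha * mu / 2 + real N))"
proof -
  interpret prob_space M by fact
  note al = assms(2) and mu = assms(3) and Ups = assms(4)
  define a where "a = alpha * mu / 2"
  define b where "b = amu_beta alpha mu Ups"
  define c where "c = D powr (- betak)"
  define k where "k = gth * PI / c"
  define C where "C = 1 / (mu * b powr a * Gamma mu)"
  define V where "V = Gamma (real N + a) / (Gamma (real N) * (1 / eta) powr a)"
  define S where "S = (\<lambda>\<omega>. \<Sum>i=1..N. G i \<omega>)"
  have a: "a > 0" and b: "b > 0" and c: "c > 0" and k: "k > 0"
    using assms(2-9) amu_beta_pos[OF al mu Ups] by (simp_all add: a_def b_def c_def k_def)
  have Gammas: "Gamma mu > 0" "Gamma (real N) > 0" "Gamma (real N + a) > 0"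
    using mu assms(10) a by (auto intro!: Gamma_real_pos)
  note indep = indep_vars_head_tail[OF assms(13), folded S_def]
  note S = sum_exponential_powr_moment[OF assms(10) _ assms(12) indep(2), of a, folded V_def]
  have equiv: "(\<lambda>t. measure M {\<omega> \<in> space M. t * H \<omega> / S \<omega> < k})
      \<sim>[at_top] (\<lambda>t. C * k powr a * V * t powr (- a))"
  proof (rule measure_scaled_ratio_less_asymp_equiv[OF indep(1) assms(11)])
    show "C > 0" "V > 0" using mu b assms(5) Gammas by (simp_all add: C_def V_def)
  qed (use S assms(5) a k amu_cdf_bounds(2)[OF al mu Ups] amu_cdf_asymp[OF al mu Ups] in
        \<open>simp_all add: amu_cdf_def S_def a_def b_def C_def\<close>)
  have event_iff: "Pj * c * h / (PI * s) < gth \<longleftrightarrow> Pj * h / s < k" for Pj h s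
  proof -
    have "c / PI * q < gth \<longleftrightarrow> q < k" for q
      using c assms(6) by (simp add: k_def field_simps)
    moreover have "Pj * c * h / (PI * s) = c / PI * (Pj * h / s)" by simp
    ultimately show ?thesis by presburger
  qed
  have target_eq: "\<forall>\<^sub>F Pj in at_top. C * k powr a * V * Pj powr (- a)
      = (gth * eta * PI) powr a / (mu * (Pj * c * b) powr a * Gamma (real N) * Gamma mu) * Gamma (a + real N)"
    using eventually_gt_at_top[of 0] by eventually_elim
      (use b c assms(5,6,9) mu Gammas in \<open>simp add: C_def k_def V_def powr_mult powr_divide powr_minus field_simps add.commute\<close>)
  have "(\<lambda>Pj. measure M {\<omega> \<in> space M. Pj * c * H \<omega> / (PI * S \<omega>) < gth})
      \<sim>[at_top] (\<lambda>Pj. (gth * eta * PI) powr a / (mu * (Pj * c * b) powr a * Gamma (real N) * Gamma mu)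
        * Gamma (a + real N))"
    by (rule asymp_equiv_cong[THEN iffD1, OF _ target_eq equiv]) (simp add: event_iff)
  then show ?thesis by (simp only: S_def a_def b_def c_def)
qed

end
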